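(* Let $D$ be a pre-divergence on a Polish space $\mathcal{X}$, $c$ a cost function, and $\mu\in\mathcal{P}(\mathcal{X})$ such that (1) $P\mapsto D(P\|\mu)$ is lower semicontinuous and has compact sublevel sets, and (2) $c(x_1,x_2)=0$ if and only if $x_1=x_2$. For $r>0$ let $c_r=rc$. Then for every $\nu\in\mathcal{P}(\mathcal{X})$, \[\lim_{r\to\infty}D^{c_r}(\nu\|\mu)=D(\nu\|\mu).\]
   Context: $\mathcal{P}(\mathcal{X})$ is the set of Borel probability measures on the Polish space $\mathcal{X}$ with the weak topology. A pre-divergence is $D:\mathcal{P}(\mathcal{X})\times\mathcal{P}(\mathcal{X})\to[0,\infty]$ with $D(\mu\|\mu)=0$ for all $\mu$. A cost function is a lower semicontinuous $c:\mathcal{X}\times\mathcal{X}\to[0,\infty]$, with OT cost $C(\mu,\nu)=\inf\{\int c\,d\pi:\pi_1=\mu,\pi_2=\nu\}$. For a cost function $c'$ with OT cost $C'$, $D^{c'}(\nu\|\mu)=\inf_{\eta\in\mathcal{P}(\mathcal{X})}\{D(\eta\|\mu)+C'(\eta,\nu)\}$. *)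

theory Defs
  imports "HOL-Analysis.Analysis" "HOL-Probability.Probability"
begin

definition Prob :: "'a::topological_space measure set" where
  "Prob = {M. sets M = sets borel \<and> prob_space M}"

definition weak_top :: "'a::topological_space measure topology" where
  "weak_top = subtopology
     (topology_generated_by
        {{P. (\<integral>x. f x \<partial>P) \<in> U} | f U. continuous_on UNIV (f :: 'a \<Rightarrow> real) \<and> bounded (range f) \<and> open U})
     Prob"

definition lsc_on :: "'b topology \<Rightarrow> ('b \<Rightarrow> ennreal) \<Rightarrow> bool" where
  "lsc_on T F \<longleftrightarrow> (\<forall>a. openin T {x \<in> topspace T. a < F x})"

definition pre_divergence :: "('a::topological_space measure \<Rightarrow> 'a measure \<Rightarrow> ennreal) \<Rightarrow> bool" where
  "pre_divergence D \<longleftrightarrow> (\<forall>\<mu>\<in>Prob. D \<mu> \<mu> = 0)"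

definition cost_function :: "('a::topological_space \<Rightarrow> 'a \<Rightarrow> ennreal) \<Rightarrow> bool" where
  "cost_function c \<longleftrightarrow> (\<forall>a. open {z. a < c (fst z) (snd z)})"

definition couplings :: "'a::topological_space measure \<Rightarrow> 'a measure \<Rightarrow> ('a \<times> 'a) measure set" where
  "couplings \<mu> \<nu> = {\<pi>. sets \<pi> = sets (borel :: ('a \<times> 'a) measure) \<and> prob_space \<pi> \<and>
       distr \<pi> borel fst = \<mu> \<and> distr \<pi> borel snd = \<nu>}"

definition OT_cost :: "('a::topological_space \<Rightarrow> 'a \<Rightarrow> ennreal) \<Rightarrow> 'a measure \<Rightarrow> 'a measure \<Rightarrow> ennreal" where
  "OT_cost c \<mu> \<nu> = (INF \<pi>\<in>couplings \<mu> \<nu>. \<integral>\<^sup>+ z. c (fst z) (snd z) \<partial>\<pi>)"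

definition D_cost :: "('a::topological_space measure \<Rightarrow> 'a measure \<Rightarrow> ennreal) \<Rightarrow>
    ('a \<Rightarrow> 'a \<Rightarrow> ennreal) \<Rightarrow> 'a measure \<Rightarrow> 'a measure \<Rightarrow> ennreal" where
  "D_cost D c' \<nu> \<mu> = (INF \<eta>\<in>Prob. D \<eta> \<mu> + OT_cost c' \<eta> \<nu>)"

end

theory Submission
  imports Defs
begin

text \<open>Taking \<open>\<eta> = \<nu>\<close> with the diagonal coupling gives \<open>D^{c_r}(\<nu>\<parallel>\<mu>) \<le> D(\<nu>\<parallel>\<mu>)\<close>
  for every \<open>r\<close>. Conversely, if \<open>a < D(\<nu>\<parallel>\<mu>)\<close>, the sublevel set
  \<open>K = {\<eta>. D(\<eta>\<parallel>\<mu>) \<le> a}\<close> is weakly compact and misses \<open>\<nu>\<close>, and \<open>C(\<eta>, \<nu>) \<ge> \<delta> > 0\<close>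
  uniformly on \<open>K\<close>: a bounded continuous \<open>f\<close> separating \<open>\<eta> \<noteq> \<nu>\<close> forces every coupling
  of a weakly nearby \<open>\<eta>'\<close> with \<open>\<nu>\<close> to charge \<open>{(x, y). f x - f y \<ge> e}\<close>; by uniform
  tightness of \<open>K\<close> part of that mass lies in a compact set, on which the lower
  semicontinuous cost vanishes nowhere and so is bounded below; compactness of \<open>K\<close>
  makes the bound uniform. Hence \<open>D(\<eta>\<parallel>\<mu>) + r C(\<eta>, \<nu>) \<ge> a\<close> for all \<open>\<eta>\<close> once
  \<open>r \<ge> a / \<delta>\<close>.\<close>

section \<open>Probability measures and the weak topology\<close>

lemma ProbD:
  assumes "P \<in> Prob"
  shows "sets P = sets borel" "prob_space P" "space P = UNIV"
proof -
  show s: "sets P = sets borel" "prob_space P" using assms unfolding Prob_def by auto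
  show "space P = UNIV" using sets_eq_imp_space_eq[OF s(1)] by simp
qed

lemma measurable_continuous_sets_borel:
  assumes "sets M = sets borel" "continuous_on UNIV f"
  shows "f \<in> borel_measurable M"
  using borel_measurable_continuous_onI[OF assms(2)] measurable_cong_sets[OF assms(1) refl] by blast

lemma integrable_continuous_bounded:
  fixes f :: "'a::topological_space \<Rightarrow> real"
  assumes "P \<in> Prob" "continuous_on UNIV f" "\<And>x. \<bar>f x\<bar> \<le> B"
  shows "integrable P f"
proof -
  interpret prob_space P using ProbD[OF assms(1)] by simp
  show ?thesis
    using assms(3) measurable_continuous_sets_borel[OF ProbD(1)[OF assms(1)] assms(2)]
    by (intro integrable_const_bound[where B=B]) auto
qed

lemma topspace_weak_top: "topspace weak_top = Prob"
proof -
  have "UNIV \<in> {{P. (\<integral>x. f x \<partial>P) \<in> U} | f U. continuous_on UNIV (f :: 'a \<Rightarrow> real) \<and> bounded (range f) \<and> open U}"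
    by (rule CollectI, rule exI[of _ "\<lambda>_. 0"], rule exI[of _ UNIV]) auto
  then have "\<Union>{{P. (\<integral>x. f x \<partial>P) \<in> U} | f U. continuous_on UNIV (f :: 'a \<Rightarrow> real) \<and> bounded (range f) \<and> open U} = (UNIV :: 'a measure set)"
    by blast
  then show ?thesis unfolding weak_top_def topspace_subtopology topology_generated_by_topspace
    by simp
qed

lemma compactin_weak_top_subset_Prob: "compactin weak_top K \<Longrightarrow> K \<subseteq> Prob"
  using compactin_subset_topspace topspace_weak_top by blast

lemma openin_weak_top_integral:
  fixes f :: "'a::topological_space \<Rightarrow> real"
  assumes "continuous_on UNIV f" "bounded (range f)" "open U"
  shows "openin weak_top {P \<in> Prob. (\<integral>x. f x \<partial>P) \<in> U}"
  unfolding weak_top_def openin_subtopology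
  using assms by (intro exI[of _ "{P. (\<integral>x. f x \<partial>P) \<in> U}"]) (auto intro!: topology_generated_by_Basis)

text \<open>The case \<open>U = UNIV\<close> is separate because \<open>infdist x {} = 0\<close>.\<close>
definition open_cutoff :: "'a::metric_space set \<Rightarrow> nat \<Rightarrow> 'a \<Rightarrow> real" where
  "open_cutoff U k x = (if U = UNIV then 1 else min 1 (real k * infdist x (- U)))"

lemma continuous_on_open_cutoff: "continuous_on UNIV (open_cutoff U k)"
  unfolding open_cutoff_def
  by (cases "U = UNIV") (auto intro!: continuous_intros continuous_on_infdist)

lemma abs_open_cutoff_le: "\<bar>open_cutoff U k x\<bar> \<le> 1"
  unfolding open_cutoff_def by (auto simp: infdist_nonneg)

lemma open_cutoff_le_indicator: "open_cutoff U k x \<le> indicator U x"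
proof (cases "x \<in> U")
  case True
  then show ?thesis using abs_open_cutoff_le[of U k x] by simp
next
  case False
  then have "U \<noteq> UNIV" "infdist x (- U) = 0" by (auto intro!: infdist_zero)
  then show ?thesis using False unfolding open_cutoff_def by simp
qed

lemma open_cutoff_tendsto_indicator:
  assumes "open U"
  shows "(\<lambda>k. open_cutoff U k x) \<longlonglongrightarrow> indicator U x"
proof (cases "x \<in> U \<and> U \<noteq> UNIV")
  case True
  have "closed (- U)" "- U \<noteq> {}" using assms True by auto
  then have "infdist x (- U) \<noteq> 0" using in_closed_iff_infdist_zero True by blast
  then have pos: "infdist x (- U) > 0" using infdist_nonneg[of x "-U"] by linarith
  obtain N :: nat where N: "1 / infdist x (- U) < N" using reals_Archimedean2 by blast
  have "open_cutoff U k x = indicator U x" if "N \<le> k" for k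
  proof -
    have "1 / infdist x (- U) < real k" using N that by linarith
    then have "1 \<le> real k * infdist x (- U)" using pos by (simp add: field_simps)
    then show ?thesis using True unfolding open_cutoff_def by simp
  qed
  then show ?thesis by (intro tendsto_eventually) (auto simp: eventually_sequentially)
next
  case False
  then have "open_cutoff U k x = indicator U x" for k
    using open_cutoff_le_indicator[of U k x] abs_open_cutoff_le[of U k x]
    by (auto simp: open_cutoff_def)
  then show ?thesis by simp
qed

lemma integral_open_cutoff_tendsto:
  fixes U :: "'a::metric_space set"
  assumes "P \<in> Prob" "open U"
  shows "(\<lambda>k. \<integral>x. open_cutoff U k x \<partial>P) \<longlonglongrightarrow> measure P U"
proof -
  interpret prob_space P using ProbD[OF assms(1)] by simp
  have U: "U \<in> sets P" using assms(2) ProbD(1)[OF assms(1)] by simp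
  have "(\<lambda>k. \<integral>x. open_cutoff U k x \<partial>P) \<longlonglongrightarrow> (\<integral>x. indicator U x \<partial>P)"
    using U measurable_continuous_sets_borel[OF ProbD(1)[OF assms(1)] continuous_on_open_cutoff]
      open_cutoff_tendsto_indicator[OF assms(2)] abs_open_cutoff_le
    by (intro integral_dominated_convergence[where w="\<lambda>_. 1"]) (auto intro!: AE_I2)
  then show ?thesis using U by simp
qed

lemma integral_open_cutoff_le_measure:
  fixes U :: "'a::metric_space set"
  assumes "P \<in> Prob" "open U"
  shows "(\<integral>x. open_cutoff U k x \<partial>P) \<le> measure P U"
proof -
  interpret prob_space P using ProbD[OF assms(1)] by simp
  have U: "U \<in> sets P" using assms(2) ProbD(1)[OF assms(1)] by simp
  have "integrable P (indicator U :: 'a \<Rightarrow> real)"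
    using U by (intro integrable_real_indicator) (auto simp: emeasure_eq_measure)
  then have "(\<integral>x. open_cutoff U k x \<partial>P) \<le> (\<integral>x. indicator U x \<partial>P)"
    using open_cutoff_le_indicator abs_open_cutoff_le
    by (intro integral_mono integrable_continuous_bounded[OF assms(1) continuous_on_open_cutoff])
      auto
  then show ?thesis using U by simp
qed

lemma openin_weak_top_measure_gt:
  fixes U :: "'a::metric_space set"
  assumes "open U"
  shows "openin weak_top {P \<in> Prob. t < measure P U}"
proof -
  have "{P \<in> Prob. t < measure P U} = (\<Union>k. {P \<in> Prob. (\<integral>x. open_cutoff U k x \<partial>P) \<in> {t<..}})"
  proof (intro equalityI subsetI)
    fix P assume P: "P \<in> {P \<in> Prob. t < measure P U}"
    then have "\<forall>\<^sub>F k in sequentially. t < (\<integral>x. open_cutoff U k x \<partial>P)"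
      using order_tendstoD(1)[OF integral_open_cutoff_tendsto[OF _ assms]] by auto
    then obtain k where "t < (\<integral>x. open_cutoff U k x \<partial>P)"
      by (meson eventually_sequentially order_refl)
    then show "P \<in> (\<Union>k. {P \<in> Prob. (\<integral>x. open_cutoff U k x \<partial>P) \<in> {t<..}})" using P by auto
  next
    fix P assume "P \<in> (\<Union>k. {P \<in> Prob. (\<integral>x. open_cutoff U k x \<partial>P) \<in> {t<..}})"
    then obtain k where "P \<in> Prob" "t < (\<integral>x. open_cutoff U k x \<partial>P)" by auto
    then show "P \<in> {P \<in> Prob. t < measure P U}"
      using integral_open_cutoff_le_measure[OF _ assms, of P k] by auto
  qed
  moreover have "openin weak_top {P \<in> Prob. (\<integral>x. open_cutoff U k x \<partial>P) \<in> {t<..}}" for k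
    using abs_open_cutoff_le
    by (intro openin_weak_top_integral continuous_on_open_cutoff)
      (auto simp: bounded_iff intro!: exI[of _ 1])
  ultimately show ?thesis by (auto intro!: openin_Union)
qed

lemma Prob_eqI_integral_le:
  fixes \<eta> \<nu> :: "'a::metric_space measure"
  assumes "\<eta> \<in> Prob" "\<nu> \<in> Prob"
    and le: "\<And>f::'a \<Rightarrow> real. continuous_on UNIV f \<Longrightarrow> (\<forall>x. \<bar>f x\<bar> \<le> 1) \<Longrightarrow>
               (\<integral>x. f x \<partial>\<eta>) \<le> (\<integral>x. f x \<partial>\<nu>)"
  shows "\<eta> = \<nu>"
proof -
  have measure_open: "measure \<eta> U = measure \<nu> U" if "open U" for U
  proof -
    have "(\<integral>x. open_cutoff U k x \<partial>\<eta>) = (\<integral>x. open_cutoff U k x \<partial>\<nu>)" for k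
    proof -
      have "continuous_on UNIV (\<lambda>x. - open_cutoff U k x)"
        by (intro continuous_on_minus continuous_on_open_cutoff)
      then show ?thesis
        using le[of "open_cutoff U k"] le[of "\<lambda>x. - open_cutoff U k x"]
          continuous_on_open_cutoff abs_open_cutoff_le by fastforce
    qed
    then have "(\<lambda>k. \<integral>x. open_cutoff U k x \<partial>\<eta>) = (\<lambda>k. \<integral>x. open_cutoff U k x \<partial>\<nu>)" by simp
    then show ?thesis
      using integral_open_cutoff_tendsto[OF assms(1) that] integral_open_cutoff_tendsto[OF assms(2) that]
      by (auto intro: LIMSEQ_unique)
  qed
  interpret e: prob_space \<eta> using ProbD[OF assms(1)] by simp
  interpret n: prob_space \<nu> using ProbD[OF assms(2)] by simp
  show ?thesis
  proof (rule measure_eqI_generator_eq[where E="Collect open" and \<Omega>=UNIV and A="\<lambda>_. UNIV"])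
    show "sets \<eta> = sigma_sets UNIV (Collect open)" "sets \<nu> = sigma_sets UNIV (Collect open)"
      using ProbD(1)[OF assms(1)] ProbD(1)[OF assms(2)] by (simp_all add: borel_def)
  qed (use measure_open in \<open>auto simp: Int_stable_def e.emeasure_eq_measure n.emeasure_eq_measure\<close>)
qed

section \<open>Compactness and uniform tightness\<close>

lemma compactin_uniform_positive_lower_bound:
  fixes F :: "'b \<Rightarrow> ennreal"
  assumes K: "compactin T K"
    and local: "\<And>x. x \<in> K \<Longrightarrow> \<exists>N \<delta>. openin T N \<and> x \<in> N \<and> \<delta> > 0 \<and> (\<forall>y\<in>N \<inter> K. ennreal \<delta> \<le> F y)"
  shows "\<exists>\<delta>>0. \<forall>y\<in>K. ennreal \<delta> \<le> F y"
proof -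
  define \<U> where "\<U> = {N. openin T N \<and> (\<exists>\<delta>>0. \<forall>y\<in>N \<inter> K. ennreal \<delta> \<le> F y)}"
  have "K \<subseteq> \<Union>\<U>"
  proof
    fix x assume "x \<in> K"
    from local[OF this] show "x \<in> \<Union>\<U>" unfolding \<U>_def by blast
  qed
  moreover have "\<forall>N\<in>\<U>. openin T N" unfolding \<U>_def by blast
  ultimately obtain \<F> where \<F>: "finite \<F>" "\<F> \<subseteq> \<U>" "K \<subseteq> \<Union>\<F>"
    using K unfolding compactin_def by meson
  then have "\<forall>N\<in>\<F>. \<exists>\<delta>>0. \<forall>y\<in>N \<inter> K. ennreal \<delta> \<le> F y" unfolding \<U>_def by blast
  then obtain d where d: "\<And>N. N \<in> \<F> \<Longrightarrow> d N > 0 \<and> (\<forall>y\<in>N \<inter> K. ennreal (d N) \<le> F y)"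
    by metis
  show ?thesis
  proof (cases "\<F> = {}")
    case True
    then show ?thesis using \<F> by (intro exI[of _ 1]) auto
  next
    case False
    show ?thesis
    proof (intro exI[of _ "Min (d ` \<F>)"] conjI ballI)
      show "Min (d ` \<F>) > 0" using False \<F> d by (subst Min_gr_iff) auto
      fix y assume "y \<in> K"
      then obtain N where N: "N \<in> \<F>" "y \<in> N" using \<F> by auto
      then have "ennreal (Min (d ` \<F>)) \<le> ennreal (d N)" using \<F> by (intro ennreal_leI) auto
      also have "\<dots> \<le> F y" using d[OF N(1)] N(2) \<open>y \<in> K\<close> by auto
      finally show "ennreal (Min (d ` \<F>)) \<le> F y" .
    qed
  qed
qed

lemma lsc_positive_lower_bound_on_compact:
  fixes F :: "'b::topological_space \<Rightarrow> ennreal"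
  assumes lsc: "\<forall>a. open {z. a < F z}" and "compact S" and pos: "\<forall>z\<in>S. 0 < F z"
  shows "\<exists>\<delta>>0. \<forall>z\<in>S. ennreal \<delta> \<le> F z"
proof (rule compactin_uniform_positive_lower_bound)
  show "compactin euclidean S" using \<open>compact S\<close> by simp
  fix z assume "z \<in> S"
  then have "0 < F z" using pos by blast
  then obtain a :: real where a: "0 < ennreal a" "ennreal a < F z"
    using ennreal_rat_dense by metis
  have "openin euclidean {y. ennreal a < F y}" using lsc by (simp flip: open_openin)
  then show "\<exists>N \<delta>. openin euclidean N \<and> z \<in> N \<and> \<delta> > 0 \<and> (\<forall>y\<in>N \<inter> S. ennreal \<delta> \<le> F y)"
    using a by (intro exI[of _ "{y. ennreal a < F y}"] exI[of _ a]) auto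
qed

lemma compactin_weak_top_uniform_measure_incseq:
  fixes K :: "'a::metric_space measure set" and V :: "nat \<Rightarrow> 'a set"
  assumes K: "compactin weak_top K" and "incseq V" "\<And>k. open (V k)" "(\<Union>k. V k) = UNIV"
    and "q < 1"
  shows "\<exists>k. \<forall>P\<in>K. q < measure P (V k)"
proof -
  define Op where "Op k = {P \<in> Prob. q < measure P (V k)}" for k
  have "K \<subseteq> \<Union>(range Op)"
  proof
    fix P assume "P \<in> K"
    then have P: "P \<in> Prob" using compactin_weak_top_subset_Prob[OF K] by auto
    interpret prob_space P using ProbD[OF P] by simp
    have "range V \<subseteq> sets P" using ProbD(1)[OF P] assms(3) by auto
    from finite_Lim_measure_incseq[OF this \<open>incseq V\<close>]
    have "(\<lambda>k. measure P (V k)) \<longlonglongrightarrow> 1"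
      using assms(4) ProbD(3)[OF P] prob_space by simp
    then have "\<forall>\<^sub>F k in sequentially. q < measure P (V k)"
      using \<open>q < 1\<close> by (rule order_tendstoD(1))
    then obtain k where "q < measure P (V k)" by (meson eventually_sequentially order_refl)
    then show "P \<in> \<Union>(range Op)" using P unfolding Op_def by auto
  qed
  moreover have "\<forall>U\<in>range Op. openin weak_top U"
    unfolding Op_def using assms(3) by (auto intro: openin_weak_top_measure_gt)
  ultimately obtain \<F> where \<F>: "finite \<F>" "\<F> \<subseteq> range Op" "K \<subseteq> \<Union>\<F>"
    using K unfolding compactin_def by blast
  then obtain S where S: "finite S" "\<F> = Op ` S" using finite_subset_image by metis
  define m where "m = Max (insert 0 S)"
  show ?thesis
  proof (intro exI[of _ m] ballI)
    fix P assume "P \<in> K"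
    then obtain k where k: "k \<in> S" "P \<in> Op k" using \<F>(3) unfolding S(2) by blast
    then have P: "P \<in> Prob" unfolding Op_def by simp
    interpret prob_space P using ProbD[OF P] by simp
    have "V k \<subseteq> V m" using k S \<open>incseq V\<close> unfolding m_def by (simp add: incseq_def)
    then have "measure P (V k) \<le> measure P (V m)"
      using ProbD(1)[OF P] assms(3) by (intro finite_measure_mono) auto
    then show "q < measure P (V m)" using k unfolding Op_def by auto
  qed
qed

lemma dense_sequence_exists:
  obtains xs :: "nat \<Rightarrow> 'a::polish_space" where "\<And>x r. r > 0 \<Longrightarrow> \<exists>i. dist (xs i) x < r"
proof -
  obtain X :: "'a set" where X: "countable X" "\<And>Y. open Y \<Longrightarrow> Y \<noteq> {} \<Longrightarrow> \<exists>d\<in>X. d \<in> Y"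
    using countable_dense_setE by blast
  have "\<exists>i. dist (from_nat_into X i) x < r" if "r > 0" for x r
  proof -
    from X(2)[OF open_ball[of x r]] \<open>r > 0\<close> obtain d where d: "d \<in> X" "d \<in> ball x r" by auto
    then have "from_nat_into X (to_nat_on X d) = d" using X(1) by simp
    then show ?thesis using d by (metis dist_commute mem_ball)
  qed
  then show ?thesis using that by blast
qed

lemma compact_Inter_finite_cball_covers:
  fixes xs :: "nat \<Rightarrow> 'a::complete_space"
  shows "compact (\<Inter>n. \<Union>i\<le>k n. cball (xs i) (1 / Suc n))"
  unfolding compact_eq_totally_bounded
proof safe
  show "Topological_Spaces.complete (\<Inter>n. \<Union>i\<le>k n. cball (xs i) (1 / Suc n))"
    unfolding complete_eq_closed by (intro closed_INT closed_UN ballI closed_cball finite_atMost)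
  fix r :: real assume "0 < r"
  then obtain n where n: "1 / real (Suc n) < r" by (rule nat_approx_posE)
  then have "(\<Inter>n. \<Union>i\<le>k n. cball (xs i) (1 / Suc n)) \<subseteq> (\<Union>x\<in>xs ` {..k n}. ball x r)" by force
  then show "\<exists>F. finite F \<and> (\<Inter>n. \<Union>i\<le>k n. cball (xs i) (1 / Suc n)) \<subseteq> (\<Union>x\<in>F. ball x r)" by blast
qed

lemma (in finite_measure) measure_UN_le_geometric:
  assumes "range A \<subseteq> sets M" "\<And>n. measure M (A n) \<le> e / 2 ^ Suc n"
  shows "measure M (\<Union>n. A n) \<le> e"
proof -
  have geometric: "(\<lambda>n. e / 2 ^ Suc n) sums e"
    using sums_mult[OF power_half_series, of e] by (simp add: power_divide)
  have summable: "summable (\<lambda>n. measure M (A n))"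
    using assms(2) by (intro summable_comparison_test[OF _ sums_summable[OF geometric]]) auto
  have "measure M (\<Union>n. A n) \<le> (\<Sum>n. measure M (A n))"
    using finite_measure_subadditive_countably[OF assms(1) summable] .
  also have "\<dots> \<le> e"
    using suminf_le[OF assms(2) summable sums_summable[OF geometric]] geometric
    by (simp add: sums_iff)
  finally show ?thesis .
qed

lemma compactin_weak_top_tight:
  fixes K :: "'a::polish_space measure set"
  assumes K: "compactin weak_top K" and "e > 0"
  obtains C where "compact C" "\<And>P. P \<in> K \<Longrightarrow> measure P (- C) \<le> e"
proof -
  obtain xs :: "nat \<Rightarrow> 'a" where xs: "\<And>x r. r > 0 \<Longrightarrow> \<exists>i. dist (xs i) x < r"
    using dense_sequence_exists by blast
  have "\<exists>k. \<forall>P\<in>K. 1 - e / 2 ^ Suc n < measure P (\<Union>i\<le>k. ball (xs i) (1 / Suc n))" for n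
  proof (rule compactin_weak_top_uniform_measure_incseq[OF K])
    show "(\<Union>k. \<Union>i\<le>k. ball (xs i) (1 / Suc n)) = UNIV"
      using xs[of "1 / Suc n"] by (auto simp: dist_commute) (meson atMost_iff order_refl)
  qed (use \<open>e > 0\<close> in \<open>auto simp: incseq_def, meson atMost_iff order_trans\<close>)
  then obtain k where k: "\<And>n P. P \<in> K \<Longrightarrow> 1 - e / 2 ^ Suc n < measure P (\<Union>i\<le>k n. ball (xs i) (1 / Suc n))"
    by metis
  define B where "B n = (\<Union>i\<le>k n. cball (xs i) (1 / Suc n))" for n
  have "measure P (- (\<Inter>n. B n)) \<le> e" if "P \<in> K" for P
  proof -
    have P: "P \<in> Prob" using compactin_weak_top_subset_Prob[OF K] that by auto
    interpret prob_space P using ProbD[OF P] by simp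
    have B_events: "B n \<in> events" for n using ProbD(1)[OF P] by (auto simp: B_def)
    have "measure P (- B n) \<le> e / 2 ^ Suc n" for n
    proof -
      have "measure P (\<Union>i\<le>k n. ball (xs i) (1 / Suc n)) \<le> measure P (B n)"
        using B_events by (intro finite_measure_mono) (auto simp: B_def)
      moreover have "measure P (- B n) = 1 - measure P (B n)"
        using prob_compl[OF B_events] ProbD(3)[OF P] by (simp add: Compl_eq_Diff_UNIV)
      ultimately show ?thesis using k[OF that, of n] by linarith
    qed
    moreover have "range (\<lambda>n. - B n) \<subseteq> events"
      using sets.compl_sets[OF B_events] ProbD(3)[OF P] by (auto simp: Compl_eq_Diff_UNIV)
    ultimately show ?thesis using measure_UN_le_geometric[of "\<lambda>n. - B n"] by simp
  qed
  then show ?thesis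
    using that compact_Inter_finite_cball_covers[of xs k] unfolding B_def by blast
qed

section \<open>Couplings and the optimal transport cost\<close>

lemma couplings_Prob: "\<pi> \<in> couplings \<eta> \<nu> \<Longrightarrow> \<pi> \<in> Prob"
  unfolding couplings_def Prob_def by auto

lemma couplings_marginalD:
  fixes \<eta> \<nu> :: "'a::topological_space measure"
  assumes "\<pi> \<in> couplings \<eta> \<nu>"
  shows "\<And>A. A \<in> sets borel \<Longrightarrow> measure \<pi> (fst -` A) = measure \<eta> A"
    and "\<And>A. A \<in> sets borel \<Longrightarrow> measure \<pi> (snd -` A) = measure \<nu> A"
    and "\<And>f::'a \<Rightarrow> real. f \<in> borel_measurable borel \<Longrightarrow> (\<integral>z. f (fst z) \<partial>\<pi>) = (\<integral>x. f x \<partial>\<eta>)"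
    and "\<And>f::'a \<Rightarrow> real. f \<in> borel_measurable borel \<Longrightarrow> (\<integral>z. f (snd z) \<partial>\<pi>) = (\<integral>x. f x \<partial>\<nu>)"
proof -
  have \<pi>: "sets \<pi> = sets borel" "distr \<pi> borel fst = \<eta>" "distr \<pi> borel snd = \<nu>"
    using assms unfolding couplings_def by auto
  have space: "space \<pi> = UNIV" using ProbD(3)[OF couplings_Prob[OF assms]] .
  have fst: "fst \<in> measurable \<pi> borel" and snd: "snd \<in> measurable \<pi> borel"
    by (auto intro!: measurable_continuous_sets_borel[OF \<pi>(1)] continuous_intros)
  show "measure \<pi> (fst -` A) = measure \<eta> A" if "A \<in> sets borel" for A
    using measure_distr[OF fst that] \<pi>(2) space by simp
  show "measure \<pi> (snd -` A) = measure \<nu> A" if "A \<in> sets borel" for A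
    using measure_distr[OF snd that] \<pi>(3) space by simp
  show "(\<integral>z. f (fst z) \<partial>\<pi>) = (\<integral>x. f x \<partial>\<eta>)" if "f \<in> borel_measurable borel" for f :: "'a \<Rightarrow> real"
    using integral_distr[OF fst that] \<pi>(2) by simp
  show "(\<integral>z. f (snd z) \<partial>\<pi>) = (\<integral>x. f x \<partial>\<nu>)" if "f \<in> borel_measurable borel" for f :: "'a \<Rightarrow> real"
    using integral_distr[OF snd that] \<pi>(3) by simp
qed

lemma coupling_measure_separating_set:
  fixes f :: "'a::topological_space \<Rightarrow> real"
  assumes \<pi>: "\<pi> \<in> couplings \<eta> \<nu>" and f: "continuous_on UNIV f" "\<And>x. \<bar>f x\<bar> \<le> 1"
    and "0 \<le> e" and gap: "2 * e < (\<integral>x. f x \<partial>\<eta>) - (\<integral>x. f x \<partial>\<nu>)"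
  shows "e / 2 < measure \<pi> {z. e \<le> f (fst z) - f (snd z)}"
proof -
  define g where "g z = f (fst z) - f (snd z)" for z
  define A where "A = {z. e \<le> g z}"
  have \<pi>_Prob: "\<pi> \<in> Prob" using couplings_Prob[OF \<pi>] .
  interpret prob_space \<pi> using ProbD(2)[OF \<pi>_Prob] .
  have "continuous_on UNIV g" unfolding g_def
    by (intro continuous_intros continuous_on_compose2[OF f(1)]) auto
  moreover have "\<bar>g z\<bar> \<le> 2" for z unfolding g_def using f(2)[of "fst z"] f(2)[of "snd z"] by linarith
  ultimately have g: "integrable \<pi> g" by (rule integrable_continuous_bounded[OF \<pi>_Prob])
  have A: "A \<in> events"
    using ProbD(1)[OF \<pi>_Prob] closed_Collect_le[OF continuous_on_const \<open>continuous_on UNIV g\<close>]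
    unfolding A_def by simp
  have "continuous_on UNIV (\<lambda>z. f (fst z))" "continuous_on UNIV (\<lambda>z::'a \<times> 'a. f (snd z))"
    by (auto intro!: continuous_on_compose2[OF f(1)] continuous_intros)
  then have "integrable \<pi> (\<lambda>z. f (fst z))" "integrable \<pi> (\<lambda>z. f (snd z))"
    using f(2) by (auto intro!: integrable_continuous_bounded[OF \<pi>_Prob])
  then have integral_g: "(\<integral>z. g z \<partial>\<pi>) = (\<integral>x. f x \<partial>\<eta>) - (\<integral>x. f x \<partial>\<nu>)"
    using couplings_marginalD(3,4)[OF \<pi> borel_measurable_continuous_onI[OF f(1)]]
    unfolding g_def by simp
  have "(\<integral>z. g z \<partial>\<pi>) \<le> (\<integral>z. 2 * indicator A z + e \<partial>\<pi>)"
  proof (rule integral_mono[OF g])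
    show "integrable \<pi> (\<lambda>z. 2 * indicator A z + e)"
      using A by (auto simp: emeasure_eq_measure)
    show "g z \<le> 2 * indicator A z + e" for z
      using \<open>\<bar>g z\<bar> \<le> 2\<close> \<open>0 \<le> e\<close> unfolding A_def by (auto simp: indicator_def)
  qed
  also have "\<dots> = 2 * measure \<pi> A + e"
    using A by (simp add: emeasure_eq_measure prob_space)
  finally show ?thesis using gap integral_g unfolding A_def g_def by linarith
qed

lemma coupling_measure_Int_Times:
  fixes \<eta> \<nu> :: "'a::topological_space measure"
  assumes \<pi>: "\<pi> \<in> couplings \<eta> \<nu>" and "A \<in> sets borel" "closed K\<^sub>1" "closed K\<^sub>2"
  shows "measure \<pi> A - measure \<eta> (- K\<^sub>1) - measure \<nu> (- K\<^sub>2) \<le> measure \<pi> (A \<inter> K\<^sub>1 \<times> K\<^sub>2)"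
proof -
  have \<pi>_Prob: "\<pi> \<in> Prob" using couplings_Prob[OF \<pi>] .
  interpret prob_space \<pi> using ProbD(2)[OF \<pi>_Prob] .
  have open_preimages: "open (fst -` (- K\<^sub>1) :: ('a \<times> 'a) set)" "open (snd -` (- K\<^sub>2) :: ('a \<times> 'a) set)"
    using assms(3,4) by (auto intro!: open_vimage_fst open_vimage_snd)
  moreover have "K\<^sub>1 \<times> K\<^sub>2 \<in> sets borel" using assms(3,4) by (intro borel_closed closed_Times)
  ultimately have events: "A \<inter> K\<^sub>1 \<times> K\<^sub>2 \<in> events" "fst -` (- K\<^sub>1) \<in> events" "snd -` (- K\<^sub>2) \<in> events"
    using assms(2) ProbD(1)[OF \<pi>_Prob] by auto
  have "A \<subseteq> (A \<inter> K\<^sub>1 \<times> K\<^sub>2) \<union> fst -` (- K\<^sub>1) \<union> snd -` (- K\<^sub>2)" by auto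
  then have "measure \<pi> A \<le> measure \<pi> ((A \<inter> K\<^sub>1 \<times> K\<^sub>2) \<union> fst -` (- K\<^sub>1) \<union> snd -` (- K\<^sub>2))"
    using events assms(2) ProbD(1)[OF \<pi>_Prob] by (intro finite_measure_mono) auto
  also have "\<dots> \<le> measure \<pi> (A \<inter> K\<^sub>1 \<times> K\<^sub>2) + measure \<pi> (fst -` (- K\<^sub>1)) + measure \<pi> (snd -` (- K\<^sub>2))"
    using events by (intro measure_Un_le[THEN order_trans] add_right_mono measure_Un_le) auto
  finally show ?thesis
    using couplings_marginalD(1,2)[OF \<pi>] assms(3,4) by (simp add: borel_open)
qed

lemma cost_function_borel_measurable:
  fixes c :: "'a::topological_space \<Rightarrow> 'a \<Rightarrow> ennreal"
  assumes "cost_function c" "sets M = sets (borel :: ('a \<times> 'a) measure)"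
  shows "(\<lambda>z. c (fst z) (snd z)) \<in> borel_measurable M"
proof (rule borel_measurableI_greater)
  fix y
  have "open {z. y < c (fst z) (snd z)}" using assms(1) unfolding cost_function_def by blast
  then show "{z \<in> space M. y < c (fst z) (snd z)} \<in> sets M"
    using assms(2) sets_eq_imp_space_eq[OF assms(2)] by simp
qed

lemma OT_cost_ge_of_coupling_mass:
  fixes c :: "'a::topological_space \<Rightarrow> 'a \<Rightarrow> ennreal"
  assumes "B \<in> sets borel" "\<forall>z\<in>B. ennreal \<delta> \<le> c (fst z) (snd z)" "0 \<le> \<delta>"
    and "\<And>\<pi>. \<pi> \<in> couplings \<eta> \<nu> \<Longrightarrow> m \<le> measure \<pi> B" "0 \<le> m"
  shows "ennreal (\<delta> * m) \<le> OT_cost c \<eta> \<nu>"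
  unfolding OT_cost_def
proof (rule INF_greatest)
  fix \<pi> assume \<pi>: "\<pi> \<in> couplings \<eta> \<nu>"
  interpret prob_space \<pi> using ProbD(2)[OF couplings_Prob[OF \<pi>]] .
  have B: "B \<in> events" using assms(1) ProbD(1)[OF couplings_Prob[OF \<pi>]] by simp
  have "ennreal (\<delta> * m) = ennreal \<delta> * ennreal m" using assms(3,5) by (rule ennreal_mult)
  also have "\<dots> \<le> ennreal \<delta> * emeasure \<pi> B"
    using assms(4)[OF \<pi>] by (auto simp: emeasure_eq_measure intro!: mult_left_mono ennreal_leI)
  also have "\<dots> = (\<integral>\<^sup>+ z. ennreal \<delta> * indicator B z \<partial>\<pi>)"
    using B by (simp add: nn_integral_cmult_indicator)
  also have "\<dots> \<le> (\<integral>\<^sup>+ z. c (fst z) (snd z) \<partial>\<pi>)"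
    using assms(2) by (intro nn_integral_mono) (auto simp: indicator_def)
  finally show "ennreal (\<delta> * m) \<le> (\<integral>\<^sup>+ z. c (fst z) (snd z) \<partial>\<pi>)" .
qed

lemma OT_cost_locally_bounded_below:
  fixes c :: "'a::polish_space \<Rightarrow> 'a \<Rightarrow> ennreal"
  assumes c: "cost_function c" "\<And>x y. c x y = 0 \<Longrightarrow> x = y"
    and K: "compactin weak_top K" and \<nu>: "\<nu> \<in> Prob" and \<eta>: "\<eta> \<in> Prob" "\<eta> \<noteq> \<nu>"
  shows "\<exists>N \<delta>. openin weak_top N \<and> \<eta> \<in> N \<and> \<delta> > 0 \<and> (\<forall>\<eta>'\<in>N \<inter> K. ennreal \<delta> \<le> OT_cost c \<eta>' \<nu>)"
proof -
  obtain f :: "'a \<Rightarrow> real" where f: "continuous_on UNIV f" "\<And>x. \<bar>f x\<bar> \<le> 1"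
    and separates: "(\<integral>x. f x \<partial>\<nu>) < (\<integral>x. f x \<partial>\<eta>)"
    using Prob_eqI_integral_le[OF \<eta>(1) \<nu>] \<eta>(2) by force
  define e where "e = ((\<integral>x. f x \<partial>\<eta>) - (\<integral>x. f x \<partial>\<nu>)) / 3"
  have "e > 0" "3 * e = (\<integral>x. f x \<partial>\<eta>) - (\<integral>x. f x \<partial>\<nu>)"
    using separates unfolding e_def by simp_all
  define N where "N = {P \<in> Prob. (\<integral>x. f x \<partial>P) \<in> {(\<integral>x. f x \<partial>\<eta>) - e<..}}"
  have "openin weak_top N"
    unfolding N_def using f by (intro openin_weak_top_integral) (auto simp: bounded_iff)
  obtain K\<^sub>1 where K\<^sub>1: "compact K\<^sub>1" "\<And>P. P \<in> K \<Longrightarrow> measure P (- K\<^sub>1) \<le> e / 8"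
    using compactin_weak_top_tight[OF K, of "e / 8"] \<open>e > 0\<close> by auto
  have "compactin weak_top {\<nu>}" using \<nu> by (simp add: topspace_weak_top)
  then obtain K\<^sub>2 where K\<^sub>2: "compact K\<^sub>2" "measure \<nu> (- K\<^sub>2) \<le> e / 8"
    using compactin_weak_top_tight[of "{\<nu>}" "e / 8"] \<open>e > 0\<close> by auto
  define A where "A = {z. e \<le> f (fst z) - f (snd z)}"
  have "closed A" unfolding A_def
    by (intro closed_Collect_le continuous_intros continuous_on_compose2[OF f(1)]) auto
  then have "compact (A \<inter> K\<^sub>1 \<times> K\<^sub>2)" using K\<^sub>1(1) K\<^sub>2(1) by (intro closed_Int_compact compact_Times)
  moreover have "\<forall>z\<in>A \<inter> K\<^sub>1 \<times> K\<^sub>2. 0 < c (fst z) (snd z)"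
    using \<open>e > 0\<close> c(2) unfolding A_def by (force simp: zero_less_iff_neq_zero)
  ultimately obtain \<delta> where \<delta>: "\<delta> > 0" "\<forall>z\<in>A \<inter> K\<^sub>1 \<times> K\<^sub>2. ennreal \<delta> \<le> c (fst z) (snd z)"
    using lsc_positive_lower_bound_on_compact[of "\<lambda>z. c (fst z) (snd z)"] c(1)
    unfolding cost_function_def by blast
  have "ennreal (\<delta> * (e / 4)) \<le> OT_cost c \<eta>' \<nu>" if \<eta>': "\<eta>' \<in> N" "\<eta>' \<in> K" for \<eta>'
  proof (rule OT_cost_ge_of_coupling_mass)
    show "A \<inter> K\<^sub>1 \<times> K\<^sub>2 \<in> sets borel"
      using \<open>compact (A \<inter> K\<^sub>1 \<times> K\<^sub>2)\<close> by (simp add: compact_imp_closed)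
    fix \<pi> assume \<pi>: "\<pi> \<in> couplings \<eta>' \<nu>"
    have "(\<integral>x. f x \<partial>\<eta>) - e < (\<integral>x. f x \<partial>\<eta>')" using \<eta>'(1) unfolding N_def by simp
    then have "2 * e < (\<integral>x. f x \<partial>\<eta>') - (\<integral>x. f x \<partial>\<nu>)"
      using \<open>3 * e = _\<close> by linarith
    then have "e / 2 < measure \<pi> A"
      unfolding A_def using \<open>e > 0\<close> by (intro coupling_measure_separating_set[OF \<pi> f]) auto
    moreover have "measure \<pi> A - measure \<eta>' (- K\<^sub>1) - measure \<nu> (- K\<^sub>2) \<le> measure \<pi> (A \<inter> K\<^sub>1 \<times> K\<^sub>2)"
      using \<open>closed A\<close> compact_imp_closed[OF K\<^sub>1(1)] compact_imp_closed[OF K\<^sub>2(1)]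
      by (intro coupling_measure_Int_Times[OF \<pi>] borel_closed)
    ultimately show "e / 4 \<le> measure \<pi> (A \<inter> K\<^sub>1 \<times> K\<^sub>2)"
      using K\<^sub>1(2)[OF \<eta>'(2)] K\<^sub>2(2) by linarith
  qed (use \<delta> \<open>e > 0\<close> in auto)
  then show ?thesis
    using \<open>openin weak_top N\<close> \<eta>(1) \<open>\<delta> > 0\<close> \<open>e > 0\<close>
    by (intro exI[of _ N] exI[of _ "\<delta> * (e / 4)"]) (auto simp: N_def)
qed

lemma OT_cost_bounded_below_on_compactin:
  fixes c :: "'a::polish_space \<Rightarrow> 'a \<Rightarrow> ennreal"
  assumes "cost_function c" "\<And>x y. c x y = 0 \<Longrightarrow> x = y"
    and K: "compactin weak_top K" and "\<nu> \<in> Prob" "\<nu> \<notin> K"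
  shows "\<exists>\<delta>>0. \<forall>\<eta>\<in>K. ennreal \<delta> \<le> OT_cost c \<eta> \<nu>"
  using compactin_weak_top_subset_Prob[OF K] assms
  by (intro compactin_uniform_positive_lower_bound[OF K] OT_cost_locally_bounded_below) auto

lemma cost_function_cmult: "cost_function c \<Longrightarrow> cost_function (\<lambda>x y. ennreal r * c x y)"
  unfolding cost_function_def
proof
  fix a assume c: "\<forall>a. open {z. a < c (fst z) (snd z)}"
  show "open {z. a < ennreal r * c (fst z) (snd z)}"
  proof (cases "r > 0")
    case True
    then have "a < ennreal r * t \<longleftrightarrow> a / ennreal r < t" for t
      by (subst divide_less_ennreal) (auto simp: mult.commute)
    then show ?thesis using c by simp
  next
    case False
    then have "ennreal r = 0" by (simp add: ennreal_eq_0_iff)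
    then show ?thesis by simp
  qed
qed

lemma OT_cost_cmult_le:
  assumes "cost_function c"
  shows "ennreal r * OT_cost c \<eta> \<nu> \<le> OT_cost (\<lambda>x y. ennreal r * c x y) \<eta> \<nu>"
  unfolding OT_cost_def
proof (rule INF_greatest)
  fix \<pi> assume \<pi>: "\<pi> \<in> couplings \<eta> \<nu>"
  have "ennreal r * (INF \<pi>\<in>couplings \<eta> \<nu>. \<integral>\<^sup>+ z. c (fst z) (snd z) \<partial>\<pi>) \<le> ennreal r * (\<integral>\<^sup>+ z. c (fst z) (snd z) \<partial>\<pi>)"
    by (intro mult_left_mono INF_lower \<pi>) auto
  also have "\<dots> = (\<integral>\<^sup>+ z. ennreal r * c (fst z) (snd z) \<partial>\<pi>)"
    using \<pi> unfolding couplings_def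
    by (intro nn_integral_cmult[symmetric] cost_function_borel_measurable[OF assms]) auto
  finally show "ennreal r * (INF \<pi>\<in>couplings \<eta> \<nu>. \<integral>\<^sup>+ z. c (fst z) (snd z) \<partial>\<pi>) \<le> (\<integral>\<^sup>+ z. ennreal r * c (fst z) (snd z) \<partial>\<pi>)" .
qed

lemma OT_cost_self:
  fixes c :: "'a::topological_space \<Rightarrow> 'a \<Rightarrow> ennreal"
  assumes "cost_function c" "\<And>x. c x x = 0" and \<nu>: "\<nu> \<in> Prob"
  shows "OT_cost c \<nu> \<nu> = 0"
proof -
  have sets_\<nu>: "sets \<nu> = sets borel" using ProbD(1)[OF \<nu>] .
  have diag: "(\<lambda>x::'a. (x, x)) \<in> measurable \<nu> borel"
    by (intro measurable_continuous_sets_borel[OF sets_\<nu>] continuous_intros)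
  define \<pi> where "\<pi> = distr \<nu> borel (\<lambda>x::'a. (x, x))"
  have "fst \<in> borel_measurable (borel :: ('a \<times> 'a) measure)"
    "snd \<in> borel_measurable (borel :: ('a \<times> 'a) measure)"
    by (auto intro!: borel_measurable_continuous_onI continuous_intros)
  then have "distr \<pi> borel fst = \<nu>" "distr \<pi> borel snd = \<nu>"
    unfolding \<pi>_def by (simp_all add: distr_distr[OF _ diag] comp_def distr_id2[OF sets_\<nu>[symmetric]])
  moreover have "prob_space \<pi>" unfolding \<pi>_def using ProbD(2)[OF \<nu>] diag by (rule prob_space.prob_space_distr)
  ultimately have "\<pi> \<in> couplings \<nu> \<nu>" unfolding couplings_def \<pi>_def by simp
  then have "OT_cost c \<nu> \<nu> \<le> (\<integral>\<^sup>+ z. c (fst z) (snd z) \<partial>\<pi>)"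
    unfolding OT_cost_def by (rule INF_lower)
  also have "\<dots> = (\<integral>\<^sup>+ x. c x x \<partial>\<nu>)"
    unfolding \<pi>_def
    by (simp add: nn_integral_distr[OF diag] cost_function_borel_measurable[OF assms(1)])
  finally show ?thesis using assms(2) by simp
qed

section \<open>Letting the cost scale tend to infinity\<close>

lemma D_cost_le:
  assumes "cost_function c" "\<And>x. c x x = 0" "\<nu> \<in> Prob"
  shows "D_cost D c \<nu> \<mu> \<le> D \<nu> \<mu>"
  using INF_lower[OF assms(3), of "\<lambda>\<eta>. D \<eta> \<mu> + OT_cost c \<eta> \<nu>"] OT_cost_self[OF assms]
  unfolding D_cost_def by simp

lemma D_cost_cmult_eventually_ge:
  fixes c :: "'a::polish_space \<Rightarrow> 'a \<Rightarrow> ennreal"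
  assumes c: "cost_function c" "\<And>x y. c x y = 0 \<Longrightarrow> x = y"
    and K: "compactin weak_top {P \<in> Prob. D P \<mu> \<le> ennreal a}"
    and \<nu>: "\<nu> \<in> Prob" "ennreal a < D \<nu> \<mu>"
  shows "\<forall>\<^sub>F r in at_top. ennreal a \<le> D_cost D (\<lambda>x y. ennreal r * c x y) \<nu> \<mu>"
proof -
  have "\<nu> \<notin> {P \<in> Prob. D P \<mu> \<le> ennreal a}" using \<nu>(2) by auto
  then obtain \<delta> where \<delta>: "\<delta> > 0" "\<forall>\<eta>\<in>{P \<in> Prob. D P \<mu> \<le> ennreal a}. ennreal \<delta> \<le> OT_cost c \<eta> \<nu>"
    using OT_cost_bounded_below_on_compactin[OF c K \<nu>(1)] by blast
  have "ennreal a \<le> D \<eta> \<mu> + OT_cost (\<lambda>x y. ennreal r * c x y) \<eta> \<nu>"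
    if "a / \<delta> \<le> r" "\<eta> \<in> Prob" for r \<eta>
  proof (cases "D \<eta> \<mu> \<le> ennreal a")
    case True
    have "ennreal a \<le> ennreal (r * \<delta>)" using that(1) \<delta>(1) by (intro ennreal_leI) (simp add: field_simps)
    also have "\<dots> = ennreal r * ennreal \<delta>" using \<delta>(1) by (simp add: ennreal_mult'')
    also have "\<dots> \<le> ennreal r * OT_cost c \<eta> \<nu>" using \<delta>(2) True that(2) by (intro mult_left_mono) auto
    also have "\<dots> \<le> OT_cost (\<lambda>x y. ennreal r * c x y) \<eta> \<nu>" by (rule OT_cost_cmult_le[OF c(1)])
    finally show ?thesis by (simp add: add_increasing)
  qed (simp add: add_increasing2)
  then show ?thesis
    unfolding D_cost_def eventually_at_top_linorder by (auto intro!: INF_greatest)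
qed

theorem theorem5:
  fixes D :: "'a::polish_space measure \<Rightarrow> 'a measure \<Rightarrow> ennreal"
    and c :: "'a \<Rightarrow> 'a \<Rightarrow> ennreal"
    and \<mu> \<nu> :: "'a measure"
  assumes "pre_divergence D"
    and "cost_function c"
    and "\<mu> \<in> Prob"
    and "lsc_on weak_top (\<lambda>P. D P \<mu>)"
    and "\<forall>a::real. compactin weak_top {P \<in> Prob. D P \<mu> \<le> ennreal a}"
    and "\<forall>x1 x2. c x1 x2 = 0 \<longleftrightarrow> x1 = x2"
    and "\<nu> \<in> Prob"
  shows "((\<lambda>r::real. D_cost D (\<lambda>x y. ennreal r * c x y) \<nu> \<mu>) \<longlongrightarrow> D \<nu> \<mu>) at_top"
proof (rule order_tendstoI)
  fix y assume "D \<nu> \<mu> < y"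
  have "D_cost D (\<lambda>x y. ennreal r * c x y) \<nu> \<mu> \<le> D \<nu> \<mu>" for r
    using assms(6) by (intro D_cost_le[OF cost_function_cmult[OF assms(2)] _ assms(7)]) simp
  then show "\<forall>\<^sub>F r in at_top. D_cost D (\<lambda>x y. ennreal r * c x y) \<nu> \<mu> < y"
    using \<open>D \<nu> \<mu> < y\<close> by (intro always_eventually allI) (rule le_less_trans)
next
  fix y assume "y < D \<nu> \<mu>"
  then obtain a :: real where a: "y < ennreal a" "ennreal a < D \<nu> \<mu>"
    using ennreal_rat_dense by metis
  have "\<forall>\<^sub>F r in at_top. ennreal a \<le> D_cost D (\<lambda>x y. ennreal r * c x y) \<nu> \<mu>"
    using assms(2,5,6,7) a(2) by (intro D_cost_cmult_eventually_ge) auto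
  then show "\<forall>\<^sub>F r in at_top. y < D_cost D (\<lambda>x y. ennreal r * c x y) \<nu> \<mu>"
    by eventually_elim (use a(1) in auto)
qed

end
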